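(* Let $n \geq 1$, $m \geq 0$ and $1 \leq j \leq n$ be integers. Then $L(m,j) = \binom{m+j-1}{m}$.
   Context: Six-vertex model: on an $r \times c$ grid ($r$ rows, $c$ columns) there are $r$ horizontal lines and $c$ vertical lines meeting in $rc$ vertices. Each horizontal line consists of $c+1$ edges (the outermost ones are a left and a right boundary edge) and each vertical line of $r+1$ edges (the outermost ones are a top and a bottom boundary edge). A state assigns an orientation to every edge, agreeing with prescribed orientations on the boundary edges, such that at every vertex exactly two of the four adjacent edges point into the vertex and two point out. $L(m,j)$ is the number of states on the grid with $n$ rows and $m+1$ columns, rows numbered $1, \ldots, n$ from top to bottom, with boundary conditions: the top boundary arrow of the leftmost column points up and all other top boundary arrows point down; all bottom boundary arrows point down; all left boundary arrows point right; the right boundary arrow in row $j$ points left and all other right boundary arrows point right. *)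

theory Defs
  imports Main
begin

text \<open>Six-vertex model on an r x c grid. Rows 1..r (top to bottom), columns 1..c
(leftb to rightb). Horizontal edges: h i k for row i \<in> {1..r} and k \<in> {0..c};
edge k of row i lies between columns k and k+1 (k = 0 is the leftb boundary edge,
k = c the rightb boundary edge). h i k = True means the edge points rightb.
Vertical edges: v l k for column l \<in> {1..c} and k \<in> {0..r}; edge k of column l
lies between rows k and k+1 (k = 0 top boundary edge, k = r bottom boundary edge).
v l k = True means the edge points down. Outside the index range the functions are
fixed to False so that states are in bijection with orientations.\<close>

definition in_count :: "(nat \<Rightarrow> nat \<Rightarrow> bool) \<Rightarrow> (nat \<Rightarrow> nat \<Rightarrow> bool) \<Rightarrow> nat \<Rightarrow> nat \<Rightarrow> nat" where
  "in_count h v i l =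
     (if h i (l - 1) then 1 else 0) + (if \<not> h i l then 1 else 0) +
     (if v l (i - 1) then 1 else 0) + (if \<not> v l i then 1 else 0)"

text \<open>Boundary data: topb l / botb l = True iff the top / bottom boundary arrow of column l
points down; leftb i / rightb i = True iff the leftb / rightb boundary arrow of row i points rightb.\<close>

definition sv_states ::
  "nat \<Rightarrow> nat \<Rightarrow> (nat \<Rightarrow> bool) \<Rightarrow> (nat \<Rightarrow> bool) \<Rightarrow> (nat \<Rightarrow> bool) \<Rightarrow> (nat \<Rightarrow> bool)
   \<Rightarrow> ((nat \<Rightarrow> nat \<Rightarrow> bool) \<times> (nat \<Rightarrow> nat \<Rightarrow> bool)) set" where
  "sv_states r c topb botb leftb rightb =
    {(h, v). (\<forall>i k. (i < 1 \<or> i > r \<or> k > c) \<longrightarrow> \<not> h i k)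
           \<and> (\<forall>l k. (l < 1 \<or> l > c \<or> k > r) \<longrightarrow> \<not> v l k)
           \<and> (\<forall>l\<in>{1..c}. v l 0 = topb l \<and> v l r = botb l)
           \<and> (\<forall>i\<in>{1..r}. h i 0 = leftb i \<and> h i c = rightb i)
           \<and> (\<forall>i\<in>{1..r}. \<forall>l\<in>{1..c}. in_count h v i l = 2)}"

definition L :: "nat \<Rightarrow> nat \<Rightarrow> nat \<Rightarrow> nat" where
  "L n m j = card (sv_states n (m + 1) (\<lambda>l. l \<noteq> 1) (\<lambda>l. True) (\<lambda>i. True) (\<lambda>i. i \<noteq> j))"

end

theory Submission
  imports Defs "HOL-Library.Multiset"
begin

text \<open>Call an edge reversed if it points left or up. The ice rule says that at every vertex the
reversed edges on the right and below are as many as those on the left and above, so the reversed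
edges form lattice paths. With all left arrows pointing right and only the top arrow of column 1
pointing up, induction over the rows shows that they form a single path, described by columns
1 = T 0 \<le> T 1 \<le> ...: it crosses from row k to row k + 1 in column T k and runs along the edges
T (i - 1) \<le> k < T i of row i, until it leaves through the right boundary. The right boundary
condition says that it leaves in row j, so the states correspond to the weakly increasing sequences
T 1 \<le> ... \<le> T (j - 1) in {1..m + 1}, i.e. to the multisets of size j - 1 drawn from m + 1
elements, of which there are (m + j - 1) choose (j - 1).\<close>

lemma in_count_eq_2_iff:
  "in_count h v i l = 2 \<longleftrightarrow>
     of_bool (\<not> h i l) + of_bool (\<not> v l i) = of_bool (\<not> h i (l - 1)) + (of_bool (\<not> v l (i - 1)) :: nat)"
  unfolding in_count_def by auto

lemma of_bool_add_eq_iff: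
  "(of_bool a + of_bool b :: nat) = of_bool c + of_bool d \<longleftrightarrow>
     (a \<and> b \<longleftrightarrow> c \<and> d) \<and> (a \<or> b \<longleftrightarrow> c \<or> d)"
  by (cases a; cases b; cases c; cases d) simp_all

definition first_column :: "nat \<Rightarrow> (nat \<Rightarrow> bool) \<Rightarrow> nat" where
  "first_column c P = (LEAST l. 1 \<le> l \<and> l \<le> c \<and> P l \<or> l = c + 1)"

lemma first_column_cases:
  "1 \<le> first_column c P \<and> first_column c P \<le> c \<and> P (first_column c P) \<or> first_column c P = c + 1"
  unfolding first_column_def by (rule LeastI[where k = "c + 1"]) simp

lemma first_column_bounds: "1 \<le> first_column c P" "first_column c P \<le> c + 1"
  using first_column_cases[of c P] by auto

lemma first_column_holds: "first_column c P \<le> c \<Longrightarrow> P (first_column c P)"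
  using first_column_cases[of c P] by auto

lemma not_less_first_column: "l < first_column c P \<Longrightarrow> 1 \<le> l \<Longrightarrow> l \<le> c \<Longrightarrow> \<not> P l"
  unfolding first_column_def using not_less_Least by blast

lemma first_column_eqI:
  assumes "\<And>l. 1 \<le> l \<Longrightarrow> l \<le> c \<Longrightarrow> P l \<longleftrightarrow> l = q" and "1 \<le> q" and "q \<le> c + 1"
  shows "first_column c P = q"
  unfolding first_column_def by (rule Least_equality) (use assms in auto)

text \<open>A single row: horiz l says that its l-th horizontal edge points left, above l and below l
that the vertical edge of column l above resp. below the row points up.\<close>

lemma reversed_edges_in_row:
  fixes horiz above below :: "nat \<Rightarrow> bool"
  assumes horiz0: "\<not> horiz 0"
    and ice: "\<And>l. 1 \<le> l \<Longrightarrow> l \<le> c \<Longrightarrow>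
      of_bool (horiz l) + of_bool (below l) = of_bool (horiz (l - 1)) + (of_bool (above l) :: nat)"
    and above: "\<And>l. 1 \<le> l \<Longrightarrow> l \<le> c \<Longrightarrow> above l \<longleftrightarrow> l = p"
    and p: "1 \<le> p" "p \<le> c + 1"
  obtains q where "p \<le> q" "q \<le> c + 1" "\<And>l. 1 \<le> l \<Longrightarrow> l \<le> c \<Longrightarrow> below l \<longleftrightarrow> l = q"
    "\<And>l. l \<le> c \<Longrightarrow> horiz l \<longleftrightarrow> p \<le> l \<and> l < q"
proof -
  define q where "q = first_column c below"
  have q_bounds: "1 \<le> q" "q \<le> c + 1"
    unfolding q_def by (rule first_column_bounds)+
  have inv: "(horiz l \<longleftrightarrow> p \<le> l \<and> l < q) \<and> (1 \<le> l \<longrightarrow> (below l \<longleftrightarrow> l = q))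
      \<and> (q \<le> l \<longrightarrow> p \<le> q)"
    if "l \<le> c" for l
    using that
  proof (induction l)
    case 0
    then show ?case using horiz0 p q_bounds by auto
  next
    case (Suc l)
    have IH: "horiz l \<longleftrightarrow> p \<le> l \<and> l < q" "q \<le> l \<longrightarrow> p \<le> q"
      using Suc by simp_all
    have "(horiz (Suc l) \<and> below (Suc l) \<longleftrightarrow> horiz l \<and> Suc l = p)
        \<and> (horiz (Suc l) \<or> below (Suc l) \<longleftrightarrow> horiz l \<or> Suc l = p)"
      using ice[of "Suc l"] above[of "Suc l"] Suc.prems unfolding of_bool_add_eq_iff by simp
    then have not_both: "\<not> (horiz (Suc l) \<and> below (Suc l))"
      and step: "horiz (Suc l) \<or> below (Suc l) \<longleftrightarrow> horiz l \<or> Suc l = p"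
      using IH(1) by auto
    consider "Suc l < q" | "Suc l = q" | "q < Suc l" by linarith
    then show ?case
    proof cases
      case 1
      then have "\<not> below (Suc l)"
        using not_less_first_column[of "Suc l" c below] Suc.prems unfolding q_def by simp
      then show ?thesis using step IH 1 by auto
    next
      case 2
      then have "q \<le> c" using Suc.prems by simp
      then have "below q" unfolding q_def by (rule first_column_holds)
      then have "below (Suc l)" unfolding 2 .
      then show ?thesis using not_both step IH 2 by auto
    next
      case 3
      then show ?thesis using step IH by auto
    qed
  qed
  show thesis
  proof (rule that)
    show "p \<le> q" using inv[of q] q_bounds p by (cases "q \<le> c") auto
    show "q \<le> c + 1" by (rule q_bounds)
    show "below l \<longleftrightarrow> l = q" if "1 \<le> l" "l \<le> c" for l
      using inv[OF that(2)] that(1) by simp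
    show "horiz l \<longleftrightarrow> p \<le> l \<and> l < q" if "l \<le> c" for l
      using inv[OF that] by simp
  qed
qed

lemma sv_states_row:
  assumes hv: "(h, v) \<in> sv_states r c topb botb (\<lambda>i. True) rightb" and k: "k < r"
    and level: "\<And>l. 1 \<le> l \<Longrightarrow> l \<le> c \<Longrightarrow> \<not> v l k \<longleftrightarrow> l = p" and p: "1 \<le> p" "p \<le> c + 1"
  obtains q where "p \<le> q" "q \<le> c + 1" "\<And>l. 1 \<le> l \<Longrightarrow> l \<le> c \<Longrightarrow> \<not> v l (Suc k) \<longleftrightarrow> l = q"
    "\<And>l. l \<le> c \<Longrightarrow> \<not> h (Suc k) l \<longleftrightarrow> p \<le> l \<and> l < q"
proof -
  have hleft: "\<And>i. 1 \<le> i \<Longrightarrow> i \<le> r \<Longrightarrow> h i 0"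
    and ice: "\<And>i l. 1 \<le> i \<Longrightarrow> i \<le> r \<Longrightarrow> 1 \<le> l \<Longrightarrow> l \<le> c \<Longrightarrow> in_count h v i l = 2"
    using hv unfolding sv_states_def by auto
  have "\<not> \<not> h (Suc k) 0" using hleft k by simp
  moreover have "of_bool (\<not> h (Suc k) l) + of_bool (\<not> v l (Suc k))
      = of_bool (\<not> h (Suc k) (l - 1)) + (of_bool (\<not> v l k) :: nat)" if "1 \<le> l" "l \<le> c" for l
    using ice[of "Suc k" l] that k unfolding in_count_eq_2_iff by simp
  ultimately show thesis
    using reversed_edges_in_row[where horiz = "\<lambda>l. \<not> h (Suc k) l" and below = "\<lambda>l. \<not> v l (Suc k)"
        and above = "\<lambda>l. \<not> v l k" and p = p and c = c] level p that
    by blast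
qed

text \<open>T k is the column in which the path crosses from row k to row k + 1, or c + 1 once it
has left the grid.\<close>

definition path_state ::
  "nat \<Rightarrow> nat \<Rightarrow> (nat \<Rightarrow> nat) \<Rightarrow> (nat \<Rightarrow> nat \<Rightarrow> bool) \<times> (nat \<Rightarrow> nat \<Rightarrow> bool)" where
  "path_state r c T =
     (\<lambda>i k. 1 \<le> i \<and> i \<le> r \<and> k \<le> c \<and> \<not> (T (i - 1) \<le> k \<and> k < T i),
      \<lambda>l k. 1 \<le> l \<and> l \<le> c \<and> k \<le> r \<and> l \<noteq> T k)"

lemma path_state_cong: "(\<And>k. k \<le> r \<Longrightarrow> T k = T' k) \<Longrightarrow> path_state r c T = path_state r c T'"
  unfolding path_state_def by (auto intro!: ext)

lemma path_state_in_sv_states: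
  assumes mono: "mono_on {..r} T" and pos: "\<And>k. k \<le> r \<Longrightarrow> 1 \<le> T k"
    and top: "\<And>l. 1 \<le> l \<Longrightarrow> l \<le> c \<Longrightarrow> topb l \<longleftrightarrow> l \<noteq> T 0"
    and bot: "\<And>l. 1 \<le> l \<Longrightarrow> l \<le> c \<Longrightarrow> botb l \<longleftrightarrow> l \<noteq> T r"
    and left: "\<And>i. 1 \<le> i \<Longrightarrow> i \<le> r \<Longrightarrow> leftb i"
    and right: "\<And>i. 1 \<le> i \<Longrightarrow> i \<le> r \<Longrightarrow> rightb i \<longleftrightarrow> \<not> (T (i - 1) \<le> c \<and> c < T i)"
  shows "path_state r c T \<in> sv_states r c topb botb leftb rightb"
proof -
  define h where "h i k \<longleftrightarrow> 1 \<le> i \<and> i \<le> r \<and> k \<le> c \<and> \<not> (T (i - 1) \<le> k \<and> k < T i)" for i k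
  define v where "v l k \<longleftrightarrow> 1 \<le> l \<and> l \<le> c \<and> k \<le> r \<and> l \<noteq> T k" for l k
  have ice: "in_count h v i l = 2" if i: "1 \<le> i" "i \<le> r" and l: "1 \<le> l" "l \<le> c" for i l
  proof -
    have "T (i - 1) \<le> T i" using mono i by (auto intro: mono_onD)
    then have flow: "of_bool (T (i - 1) \<le> l \<and> l < T i) + of_bool (l = T i)
        = of_bool (T (i - 1) \<le> l - 1 \<and> l - 1 < T i) + (of_bool (l = T (i - 1)) :: nat)"
      using l(1) by (cases "l < T (i - 1)"; cases "l = T (i - 1)"; cases "l < T i"; cases "l = T i") auto
    have edges: "h i l \<longleftrightarrow> \<not> (T (i - 1) \<le> l \<and> l < T i)" "v l i \<longleftrightarrow> l \<noteq> T i"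
      "h i (l - 1) \<longleftrightarrow> \<not> (T (i - 1) \<le> l - 1 \<and> l - 1 < T i)" "v l (i - 1) \<longleftrightarrow> l \<noteq> T (i - 1)"
      using i l unfolding h_def v_def by auto
    show ?thesis using flow unfolding in_count_eq_2_iff edges by simp
  qed
  have "(h, v) \<in> sv_states r c topb botb leftb rightb"
    unfolding sv_states_def mem_Collect_eq case_prod_conv
  proof (intro conjI ballI allI impI)
    fix i l assume "i \<in> {1..r}" "l \<in> {1..c}"
    then show "in_count h v i l = 2" using ice by simp
  next
    fix l assume "l \<in> {1..c}"
    then show "v l 0 = topb l" "v l r = botb l" using top bot unfolding v_def by auto
  next
    fix i assume i: "i \<in> {1..r}"
    have "i - 1 \<le> r" using i by (simp add: le_diff_conv)
    then have "1 \<le> T (i - 1)" by (rule pos)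
    then show "h i 0 = leftb i" using i left unfolding h_def by auto
    show "h i c = rightb i" using i right unfolding h_def by auto
  qed (auto simp: h_def v_def)
  then show ?thesis unfolding path_state_def h_def v_def by simp
qed

lemma first_column_path_state:
  assumes "k \<le> r" and "1 \<le> T k" and "T k \<le> c + 1"
  shows "first_column c (\<lambda>l. \<not> snd (path_state r c T) l k) = T k"
  using assms by (intro first_column_eqI) (auto simp: path_state_def)

lemma mono_on_atMost_SucI:
  fixes f :: "nat \<Rightarrow> 'a :: preorder"
  assumes "\<And>k. k < r \<Longrightarrow> f k \<le> f (Suc k)"
  shows "mono_on {..r} f"
proof (rule mono_onI)
  fix a b assume "a \<in> {..r}" "b \<in> {..r}" "a \<le> b"
  from \<open>a \<le> b\<close> \<open>b \<in> {..r}\<close> show "f a \<le> f b"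
  proof (induction b rule: dec_induct)
    case (step b)
    then have "f a \<le> f b" "f b \<le> f (Suc b)" using assms[of b] by auto
    then show ?case by (rule order_trans)
  qed simp
qed

lemma sv_state_eq_path_state:
  assumes hv: "(h, v) \<in> sv_states r c topb botb (\<lambda>i. True) rightb"
    and top: "\<And>l. 1 \<le> l \<Longrightarrow> l \<le> c \<Longrightarrow> topb l \<longleftrightarrow> l \<noteq> p" and p: "1 \<le> p" "p \<le> c + 1"
  defines "T \<equiv> \<lambda>k. first_column c (\<lambda>l. \<not> v l k)"
  shows "(h, v) = path_state r c T" and "mono_on {..r} T" and "T 0 = p"
proof -
  have hout: "\<And>i k. i < 1 \<or> i > r \<or> k > c \<Longrightarrow> \<not> h i k"
    and vout: "\<And>l k. l < 1 \<or> l > c \<or> k > r \<Longrightarrow> \<not> v l k"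
    and vtop: "\<And>l. 1 \<le> l \<Longrightarrow> l \<le> c \<Longrightarrow> \<not> v l 0 \<longleftrightarrow> l = p"
    using hv top unfolding sv_states_def by auto
  show T0: "T 0 = p"
    unfolding T_def by (rule first_column_eqI) (use vtop p in auto)
  have row: "T k \<le> T (Suc k)
      \<and> (\<forall>l. 1 \<le> l \<longrightarrow> l \<le> c \<longrightarrow> (\<not> v l (Suc k) \<longleftrightarrow> l = T (Suc k)))
      \<and> (\<forall>l\<le>c. \<not> h (Suc k) l \<longleftrightarrow> T k \<le> l \<and> l < T (Suc k))"
    if k: "k < r" and level: "\<And>l. 1 \<le> l \<Longrightarrow> l \<le> c \<Longrightarrow> \<not> v l k \<longleftrightarrow> l = T k" for k
  proof -
    have Tk: "1 \<le> T k" "T k \<le> c + 1"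
      unfolding T_def by (rule first_column_bounds)+
    obtain q where q: "T k \<le> q" "q \<le> c + 1"
        "\<And>l. 1 \<le> l \<Longrightarrow> l \<le> c \<Longrightarrow> \<not> v l (Suc k) \<longleftrightarrow> l = q"
        "\<And>l. l \<le> c \<Longrightarrow> \<not> h (Suc k) l \<longleftrightarrow> T k \<le> l \<and> l < q"
      using sv_states_row[OF hv k level Tk] by blast
    moreover have "T (Suc k) = q"
      unfolding T_def by (rule first_column_eqI) (use q Tk in auto)
    ultimately show ?thesis by auto
  qed
  have level: "\<not> v l k \<longleftrightarrow> l = T k" if "k \<le> r" "1 \<le> l" "l \<le> c" for k l
    using that
  proof (induction k arbitrary: l)
    case 0
    then show ?case using vtop T0 by simp
  next
    case (Suc k)
    then show ?case using row[of k] by simp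
  qed
  have le_T_Suc: "T k \<le> T (Suc k)"
    and hrow: "\<And>l. l \<le> c \<Longrightarrow> \<not> h (Suc k) l \<longleftrightarrow> T k \<le> l \<and> l < T (Suc k)"
    if "k < r" for k
    using row[of k] level[of k] that by auto
  show "mono_on {..r} T"
    using le_T_Suc by (rule mono_on_atMost_SucI)
  show "(h, v) = path_state r c T"
    unfolding path_state_def prod.inject
  proof (intro conjI ext)
    fix i k
    show "h i k \<longleftrightarrow> 1 \<le> i \<and> i \<le> r \<and> k \<le> c \<and> \<not> (T (i - 1) \<le> k \<and> k < T i)"
    proof (cases "1 \<le> i \<and> i \<le> r \<and> k \<le> c")
      case True
      then have "i = Suc (i - 1)" "i - 1 < r" by auto
      then show ?thesis using hrow[of "i - 1" k] True by metis
    qed (use hout in auto)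
    show "v i k \<longleftrightarrow> 1 \<le> i \<and> i \<le> c \<and> k \<le> r \<and> i \<noteq> T k"
    proof (cases "1 \<le> i \<and> i \<le> c \<and> k \<le> r")
      case True
      then show ?thesis using level[of k i] by blast
    qed (use vout in auto)
  qed
qed

definition path_of_list :: "nat \<Rightarrow> nat list \<Rightarrow> nat \<Rightarrow> nat" where
  "path_of_list c xs k = (if k \<le> length xs then (1 # xs) ! k else c + 1)"

lemma path_of_list_bounds:
  assumes "set xs \<subseteq> {1..c}" and "1 \<le> c"
  shows "1 \<le> path_of_list c xs k" and "path_of_list c xs k \<le> c + 1"
    and "path_of_list c xs k \<le> c \<longleftrightarrow> k \<le> length xs"
proof -
  have "k \<le> length xs \<Longrightarrow> (1 # xs) ! k \<in> {1..c}"
    using nth_mem[of k "1 # xs"] assms by auto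
  then show "1 \<le> path_of_list c xs k" "path_of_list c xs k \<le> c + 1"
    "path_of_list c xs k \<le> c \<longleftrightarrow> k \<le> length xs"
    unfolding path_of_list_def by auto
qed

lemma mono_path_of_list:
  assumes "sorted xs" and "set xs \<subseteq> {1..c}"
  shows "mono (path_of_list c xs)"
proof (rule monoI)
  fix a b :: nat assume "a \<le> b"
  have "sorted (1 # xs)" using assms by auto
  moreover have "(1 # xs) ! a \<le> c + 1" if "a \<le> length xs"
    using nth_mem[of a "1 # xs"] that assms by auto
  ultimately show "path_of_list c xs a \<le> path_of_list c xs b"
    using \<open>a \<le> b\<close> unfolding path_of_list_def sorted_iff_nth_mono by auto
qed

lemma path_of_list_in_sv_states:
  assumes "sorted xs" and "set xs \<subseteq> {1..c}" and "length xs < r" and "1 \<le> c"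
  shows "path_state r c (path_of_list c xs)
           \<in> sv_states r c (\<lambda>l. l \<noteq> 1) (\<lambda>l. True) (\<lambda>i. True) (\<lambda>i. i \<noteq> Suc (length xs))"
proof (rule path_state_in_sv_states)
  show "mono_on {..r} (path_of_list c xs)"
    using mono_path_of_list[OF assms(1,2)] by (rule mono_imp_mono_on)
  show "1 \<le> path_of_list c xs k" for k
    using path_of_list_bounds assms by blast
  show "l \<noteq> 1 \<longleftrightarrow> l \<noteq> path_of_list c xs 0" for l
    by (simp add: path_of_list_def)
  have "path_of_list c xs r = c + 1"
    using assms(3) by (simp add: path_of_list_def)
  then show "True \<longleftrightarrow> l \<noteq> path_of_list c xs r" if "l \<le> c" for l
    using that by simp
  show "i \<noteq> Suc (length xs) \<longleftrightarrow> \<not> (path_of_list c xs (i - 1) \<le> c \<and> c < path_of_list c xs i)"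
    if "1 \<le> i" for i
    using that path_of_list_bounds(3)[OF assms(2,4), of i] path_of_list_bounds(3)[OF assms(2,4), of "i - 1"]
    by linarith
qed simp

lemma sv_states_path_of_listE:
  assumes st: "st \<in> sv_states r c (\<lambda>l. l \<noteq> 1) (\<lambda>l. True) (\<lambda>i. True) (\<lambda>i. i \<noteq> Suc d)"
    and "d < r"
  obtains xs where "sorted xs" "length xs = d" "set xs \<subseteq> {1..c}"
    "st = path_state r c (path_of_list c xs)"
proof -
  obtain h v where hv: "st = (h, v)" by fastforce
  define T where "T k = first_column c (\<lambda>l. \<not> v l k)" for k
  have path: "(h, v) = path_state r c T" and mono: "mono_on {..r} T" and T0: "T 0 = 1"
    using sv_state_eq_path_state[of h v r c "\<lambda>l. l \<noteq> 1" "\<lambda>l. True" "\<lambda>i. i \<noteq> Suc d" 1] st hv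
    unfolding T_def by auto
  have bounds: "1 \<le> T k" "T k \<le> c + 1" for k
    unfolding T_def by (rule first_column_bounds)+
  have "\<not> h (Suc d) c"
    using st hv \<open>d < r\<close> unfolding sv_states_def by auto
  moreover have "h (Suc d) c \<longleftrightarrow> \<not> (T d \<le> c \<and> c < T (Suc d))"
    using path \<open>d < r\<close> unfolding path_state_def by simp
  ultimately have Td: "T d \<le> c" and TSd: "T (Suc d) = c + 1"
    using bounds[of "Suc d"] by auto
  define xs where "xs = map T [1..<Suc d]"
  have "T k = path_of_list c xs k" if "k \<le> r" for k
  proof -
    consider "k = 0" | "1 \<le> k" "k \<le> d" | "d < k" by linarith
    then show ?thesis
    proof cases
      case 2
      then show ?thesis by (simp add: path_of_list_def xs_def nth_Cons' del: upt_Suc)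
    next
      case 3
      then have "T (Suc d) \<le> T k" using mono that by (auto intro: mono_onD)
      then show ?thesis using 3 TSd bounds[of k] by (simp add: path_of_list_def xs_def)
    qed (simp add: path_of_list_def T0)
  qed
  then have "path_state r c T = path_state r c (path_of_list c xs)"
    by (rule path_state_cong)
  then have "st = path_state r c (path_of_list c xs)"
    using hv path by simp
  moreover have "sorted xs"
  proof -
    have "mono_on (set [1..<Suc d]) T" by (rule mono_on_subset[OF mono]) (use \<open>d < r\<close> in auto)
    then show ?thesis unfolding xs_def by (rule sorted_map_mono[OF sorted_upt])
  qed
  moreover have "set xs \<subseteq> {1..c}"
  proof -
    have "T k \<le> c" if "k \<le> d" for k
      using mono_onD[OF mono, of k d] Td that \<open>d < r\<close> by auto
    then show ?thesis using bounds unfolding xs_def by auto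
  qed
  ultimately show thesis using that by (simp add: xs_def)
qed

lemma inj_on_path_of_list:
  assumes "d < r" and "1 \<le> c"
  shows "inj_on (\<lambda>xs. path_state r c (path_of_list c xs)) {xs. length xs = d \<and> set xs \<subseteq> {1..c}}"
proof (rule inj_onI)
  fix xs ys
  assume xs: "xs \<in> {xs. length xs = d \<and> set xs \<subseteq> {1..c}}"
    and ys: "ys \<in> {xs. length xs = d \<and> set xs \<subseteq> {1..c}}"
    and eq: "path_state r c (path_of_list c xs) = path_state r c (path_of_list c ys)"
  have agree: "path_of_list c xs k = path_of_list c ys k" if "k \<le> r" for k
    using first_column_path_state[OF that, of "path_of_list c xs" c]
      first_column_path_state[OF that, of "path_of_list c ys" c]
      path_of_list_bounds xs ys eq \<open>1 \<le> c\<close> by auto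
  have nth: "path_of_list c zs (Suc i) = zs ! i" if "i < length zs" for zs i
    using that by (simp add: path_of_list_def)
  show "xs = ys"
  proof (rule nth_equalityI)
    show "length xs = length ys" using xs ys by simp
  next
    fix i assume i: "i < length xs"
    then have "Suc i \<le> r" using xs \<open>d < r\<close> by simp
    have "xs ! i = path_of_list c xs (Suc i)" using nth i by simp
    also have "\<dots> = path_of_list c ys (Suc i)" using agree \<open>Suc i \<le> r\<close> by simp
    also have "\<dots> = ys ! i" using nth[of i ys] i xs ys by simp
    finally show "xs ! i = ys ! i" .
  qed
qed

lemma bij_betw_mset_sorted_lists:
  "bij_betw mset {xs. sorted xs \<and> length xs = d \<and> set xs \<subseteq> A} (multisets_of_size A d)"
proof (rule bij_betwI')
  fix xs ys
  assume "xs \<in> {xs. sorted xs \<and> length xs = d \<and> set xs \<subseteq> A}"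
    and "ys \<in> {xs. sorted xs \<and> length xs = d \<and> set xs \<subseteq> A}"
  then show "mset xs = mset ys \<longleftrightarrow> xs = ys"
    by (metis mem_Collect_eq sorted_list_of_multiset_mset sorted_sort_id)
next
  fix M assume "M \<in> multisets_of_size A d"
  then show "\<exists>xs\<in>{xs. sorted xs \<and> length xs = d \<and> set xs \<subseteq> A}. M = mset xs"
    by (intro bexI[of _ "sorted_list_of_multiset M"]) (auto simp: multisets_of_size_def simp flip: size_mset)
qed (auto simp: multisets_of_size_def)

lemma card_sorted_lists:
  fixes A :: "'a :: linorder set"
  assumes "finite A"
  shows "card {xs. sorted xs \<and> length xs = d \<and> set xs \<subseteq> A} = (card A + d - 1) choose d"
  using bij_betw_same_card[OF bij_betw_mset_sorted_lists[of d A]] card_multisets_of_size[OF assms, of d]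
  by simp

lemma card_sv_states_single_path:
  assumes "d < r" and "1 \<le> c"
  shows "card (sv_states r c (\<lambda>l. l \<noteq> 1) (\<lambda>l. True) (\<lambda>i. True) (\<lambda>i. i \<noteq> Suc d))
           = (c + d - 1) choose d"
proof -
  let ?S = "sv_states r c (\<lambda>l. l \<noteq> 1) (\<lambda>l. True) (\<lambda>i. True) (\<lambda>i. i \<noteq> Suc d)"
  let ?Xs = "{xs. sorted xs \<and> length xs = d \<and> set xs \<subseteq> {1..c}}"
  have "bij_betw (\<lambda>xs. path_state r c (path_of_list c xs)) ?Xs ?S"
  proof (rule bij_betw_imageI)
    show "inj_on (\<lambda>xs. path_state r c (path_of_list c xs)) ?Xs"
      by (rule inj_on_subset[OF inj_on_path_of_list[OF assms]]) auto
    show "(\<lambda>xs. path_state r c (path_of_list c xs)) ` ?Xs = ?S"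
    proof (intro equalityI subsetI)
      fix st assume "st \<in> ?S"
      then show "st \<in> (\<lambda>xs. path_state r c (path_of_list c xs)) ` ?Xs"
        using \<open>d < r\<close> by (elim sv_states_path_of_listE) auto
    qed (use path_of_list_in_sv_states assms in fastforce)
  qed
  then have "card ?S = card ?Xs" by (rule bij_betw_same_card[symmetric])
  then show ?thesis by (simp add: card_sorted_lists)
qed

theorem lemma2:
  fixes n m j :: nat
  assumes "n \<ge> 1" and "1 \<le> j" and "j \<le> n"
  shows "L n m j = (m + j - 1) choose m"
proof -
  have "L n m j = (m + 1 + (j - 1) - 1) choose (j - 1)"
    unfolding L_def using card_sv_states_single_path[of "j - 1" n "m + 1"] assms by simp
  also have "\<dots> = (m + j - 1) choose m"
    using binomial_symmetric[of m "m + j - 1"] assms by simp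
  finally show ?thesis .
qed

end
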